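(* Let $Q_4$ be the edge graph of the $4$-dimensional hypercube (vertices $\{0,1\}^4$, two vertices adjacent iff they differ in exactly one coordinate). Up to a permutation of the colours (simultaneous permutation of rows and columns of the colour adjacency matrix), the colour adjacency matrices of perfect $2$-colourings of $Q_4$ are exactly the five matrices \[ \begin{pmatrix} 0 & 4 \\ 4 & 0 \end{pmatrix}, \begin{pmatrix} 1 & 3 \\ 1 & 3 \end{pmatrix}, \begin{pmatrix} 1 & 3 \\ 3 & 1 \end{pmatrix}, \begin{pmatrix} 2 & 2 \\ 2 & 2 \end{pmatrix}, \begin{pmatrix} 3 & 1 \\ 1 & 3 \end{pmatrix}, \] and the colour adjacency matrices of perfect $3$-colourings of $Q_4$ are exactly the five matrices \[ \begin{pmatrix} 0 & 0 & 4 \\ 0 & 0 & 4 \\ 1 & 3 & 0 \end{pmatrix}, \begin{pmatrix} 0 & 0 & 4 \\ 0 & 0 & 4 \\ 2 & 2 & 0 \end{pmatrix}, \begin{pmatrix} 0 & 2 & 2 \\ 2 & 0 & 2 \\ 1 & 1 & 2 \end{pmatrix}, \begin{pmatrix} 1 & 1 & 2 \\ 1 & 1 & 2 \\ 1 & 1 & 2 \end{pmatrix}, \begin{pmatrix} 2 & 0 & 2 \\ 0 & 2 & 2 \\ 1 & 1 & 2 \end{pmatrix}. \] In particular each of these matrices is realized by some perfect colouring of $Q_4$.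
   Context: An $m$-colouring of a graph $G=(V,E)$ is a partition of $V$ into $m$ disjoint nonempty sets $V_1,\dots,V_m$ (the colours; adjacent vertices may have the same colour). It is perfect if for all $i,j$ every vertex of colour $i$ has the same number $a_{ij}$ of neighbours of colour $j$; the matrix $A=(a_{ij})$ is its colour adjacency matrix. Relabelling colours by a permutation $\sigma$ replaces $A$ by $(a_{\sigma(i)\sigma(j)})$. *)

theory Defs
  imports Main "HOL-Combinatorics.Permutations"
begin

definition Q4_V :: "bool list set" where
  "Q4_V = {v. length v = 4}"

definition Q4_adj :: "bool list \<Rightarrow> bool list \<Rightarrow> bool" where
  "Q4_adj u v \<longleftrightarrow> card {i. i < 4 \<and> u ! i \<noteq> v ! i} = 1"

text \<open>An m-colouring of (V,E) is given by a colour map c : V -> {0..<m} that is onto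
  (so the colour classes V_i = c^-1(i) form a partition of V into m nonempty sets).\<close>

definition is_colouring :: "'v set \<Rightarrow> nat \<Rightarrow> ('v \<Rightarrow> nat) \<Rightarrow> bool" where
  "is_colouring V m c \<longleftrightarrow> c ` V = {..<m}"

definition perfect_colouring ::
  "'v set \<Rightarrow> ('v \<Rightarrow> 'v \<Rightarrow> bool) \<Rightarrow> nat \<Rightarrow> ('v \<Rightarrow> nat) \<Rightarrow> (nat \<Rightarrow> nat \<Rightarrow> nat) \<Rightarrow> bool" where
  "perfect_colouring V E m c A \<longleftrightarrow> is_colouring V m c \<and>
     (\<forall>i<m. \<forall>j<m. \<forall>v\<in>V. c v = i \<longrightarrow> card {w\<in>V. E v w \<and> c w = j} = A i j)"

definition mat_of :: "nat list list \<Rightarrow> nat \<Rightarrow> nat \<Rightarrow> nat" where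
  "mat_of rows i j = rows ! i ! j"

definition equiv_up_to_perm :: "nat \<Rightarrow> (nat \<Rightarrow> nat \<Rightarrow> nat) \<Rightarrow> (nat \<Rightarrow> nat \<Rightarrow> nat) \<Rightarrow> bool" where
  "equiv_up_to_perm m A M \<longleftrightarrow>
     (\<exists>\<sigma>. \<sigma> permutes {..<m} \<and> (\<forall>i<m. \<forall>j<m. A (\<sigma> i) (\<sigma> j) = M i j))"

end

theory Submission
  imports Defs
begin

(* A perfect colouring of Q4 with colour matrix A forces four properties of A. Its rows sum to
   the degree 4. The class sizes n_i are positive, add up to 16 and satisfy n_i a_ij = n_j a_ji,
   both sides counting the edges between classes i and j. The entries of A^2 are even, since
   (A^2)_ij counts the walks of length 2 from a fixed vertex of colour i into class j and any two
   vertices of Q4 have an even number of common neighbours. No proper nonempty set of colours is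
   closed under a_ij > 0, since Q4 is connected. An exhaustive search over all 2 x 2 and 3 x 3
   matrices with row sums 4 shows that, up to relabelling the colours, only the listed matrices
   have these properties, and explicit colourings realise each of them. *)

section \<open>Perfect colourings of finite graphs\<close>

lemma card_filter_eq_sum_of_bool: "finite A \<Longrightarrow> card {x\<in>A. P x} = (\<Sum>x\<in>A. of_bool (P x))"
  by (simp add: Int_def)

context
  fixes V E m c A
  assumes perfect: "perfect_colouring V E m c A"
begin

lemma perfect_colouring_image: "c ` V = {..<m}"
  using perfect by (simp add: perfect_colouring_def is_colouring_def)

lemma perfect_colouring_colour_less: "v \<in> V \<Longrightarrow> c v < m"
  using perfect_colouring_image by blast

lemma perfect_colouring_colour_exists: "i < m \<Longrightarrow> \<exists>v\<in>V. c v = i"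
  using perfect_colouring_image by (metis imageE lessThan_iff)

lemma perfect_colouring_neighbours:
  "v \<in> V \<Longrightarrow> j < m \<Longrightarrow> card {w\<in>V. E v w \<and> c w = j} = A (c v) j"
  using perfect perfect_colouring_colour_less unfolding perfect_colouring_def by blast

lemma perfect_colouring_sum_classes:
  assumes "finite S" "S \<subseteq> V"
  shows "(\<Sum>k<m. f k * card {x\<in>S. c x = k}) = (\<Sum>x\<in>S. f (c x))"
proof -
  have "(\<Sum>k<m. f k * card {x\<in>S. c x = k}) = (\<Sum>k<m. \<Sum>x\<in>{x\<in>S. c x = k}. f (c x))"
    by (simp add: mult.commute)
  also have "\<dots> = (\<Sum>x\<in>S. f (c x))"
    using assms perfect_colouring_colour_less by (intro sum.group) auto
  finally show ?thesis .
qed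

lemma perfect_colouring_sum_row:
  assumes "finite V" "v \<in> V"
  shows "(\<Sum>j<m. A (c v) j * f j) = (\<Sum>w\<in>{w\<in>V. E v w}. f (c w))"
proof -
  have "(\<Sum>j<m. A (c v) j * f j) = (\<Sum>j<m. f j * card {w\<in>{w\<in>V. E v w}. c w = j})"
    using assms perfect_colouring_neighbours by (intro sum.cong) simp_all
  also have "\<dots> = (\<Sum>w\<in>{w\<in>V. E v w}. f (c w))"
    using assms by (intro perfect_colouring_sum_classes) auto
  finally show ?thesis .
qed

lemma perfect_colouring_row_sum:
  assumes "finite V" and regular: "\<forall>v\<in>V. card {w\<in>V. E v w} = d" and "i < m"
  shows "(\<Sum>j<m. A i j) = d"
proof -
  obtain v where v: "v \<in> V" "c v = i"
    using perfect_colouring_colour_exists \<open>i < m\<close> by blast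
  have "(\<Sum>j<m. A i j) = (\<Sum>j<m. A (c v) j * 1)" using v by simp
  also have "\<dots> = card {w\<in>V. E v w}"
    using perfect_colouring_sum_row[OF \<open>finite V\<close> v(1), of "\<lambda>_. 1"] by simp
  finally show ?thesis using regular v by simp
qed

lemma perfect_colouring_edge_count:
  assumes "finite V" "i < m" "j < m"
  shows "card {v\<in>V. c v = i} * A i j = card {(v, w) \<in> V \<times> V. c v = i \<and> E v w \<and> c w = j}"
proof -
  have "card {v\<in>V. c v = i} * A i j = (\<Sum>v\<in>{v\<in>V. c v = i}. card {w\<in>V. E v w \<and> c w = j})"
    using perfect_colouring_neighbours assms by simp
  also have "\<dots> = card (SIGMA v:{v\<in>V. c v = i}. {w\<in>V. E v w \<and> c w = j})"
    using assms by simp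
  also have "(SIGMA v:{v\<in>V. c v = i}. {w\<in>V. E v w \<and> c w = j}) =
      {(v, w) \<in> V \<times> V. c v = i \<and> E v w \<and> c w = j}"
    by auto
  finally show ?thesis .
qed

lemma perfect_colouring_class_balance:
  assumes "finite V" and sym: "\<forall>v\<in>V. \<forall>w\<in>V. E v w \<longleftrightarrow> E w v" and "i < m" "j < m"
  shows "card {v\<in>V. c v = i} * A i j = card {v\<in>V. c v = j} * A j i"
proof -
  have "{(v, w) \<in> V \<times> V. c v = j \<and> E v w \<and> c w = i} =
      prod.swap ` {(v, w) \<in> V \<times> V. c v = i \<and> E v w \<and> c w = j}"
    using sym by auto
  then have "card {(v, w) \<in> V \<times> V. c v = j \<and> E v w \<and> c w = i} =
      card {(v, w) \<in> V \<times> V. c v = i \<and> E v w \<and> c w = j}"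
    by (simp add: card_image)
  then show ?thesis
    using perfect_colouring_edge_count assms by simp
qed

lemma perfect_colouring_square_even:
  assumes "finite V"
    and even_common: "\<forall>v\<in>V. \<forall>u\<in>V. even (card {w\<in>V. E v w \<and> E w u})"
    and "i < m" "j < m"
  shows "even (\<Sum>k<m. A i k * A k j)"
proof -
  obtain v where v: "v \<in> V" "c v = i"
    using perfect_colouring_colour_exists \<open>i < m\<close> by blast
  define N where "N = {w\<in>V. E v w}"
  have "finite N" using \<open>finite V\<close> by (simp add: N_def)
  have "(\<Sum>k<m. A i k * A k j) = (\<Sum>w\<in>N. A (c w) j)"
    using perfect_colouring_sum_row[OF \<open>finite V\<close> v(1)] v by (simp add: N_def)
  also have "\<dots> = (\<Sum>w\<in>N. card {u\<in>{u\<in>V. c u = j}. E w u})"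
  proof (rule sum.cong)
    fix w assume "w \<in> N"
    have "{u\<in>{u\<in>V. c u = j}. E w u} = {u\<in>V. E w u \<and> c u = j}" by auto
    then show "A (c w) j = card {u\<in>{u\<in>V. c u = j}. E w u}"
      using perfect_colouring_neighbours \<open>w \<in> N\<close> \<open>j < m\<close> by (simp add: N_def)
  qed simp
  also have "\<dots> = (\<Sum>w\<in>N. \<Sum>u\<in>{u\<in>V. c u = j}. of_bool (E w u))"
    using \<open>finite V\<close> by (intro sum.cong refl card_filter_eq_sum_of_bool) simp
  also have "\<dots> = (\<Sum>u\<in>{u\<in>V. c u = j}. \<Sum>w\<in>N. of_bool (E w u))"
    by (rule sum.swap)
  also have "\<dots> = (\<Sum>u\<in>{u\<in>V. c u = j}. card {w\<in>V. E v w \<and> E w u})"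
  proof (rule sum.cong)
    fix u
    have "{w\<in>V. E v w \<and> E w u} = {w\<in>N. E w u}" by (auto simp: N_def)
    then show "(\<Sum>w\<in>N. of_bool (E w u)) = card {w\<in>V. E v w \<and> E w u}"
      using \<open>finite N\<close> by (simp add: card_filter_eq_sum_of_bool)
  qed simp
  finally show ?thesis
    using even_common v(1) by (auto intro: dvd_sum)
qed

lemma perfect_colouring_irreducible:
  assumes "finite V"
    and connected: "\<And>U. U \<subseteq> V \<Longrightarrow> U \<noteq> {} \<Longrightarrow> \<forall>u\<in>U. \<forall>w\<in>V. E u w \<longrightarrow> w \<in> U \<Longrightarrow> U = V"
    and T: "T \<subseteq> {..<m}" "T \<noteq> {}" "T \<noteq> {..<m}"
  shows "\<exists>a\<in>T. \<exists>b<m. b \<notin> T \<and> A a b \<noteq> 0"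
proof (rule ccontr)
  assume no_exit: "\<not> ?thesis"
  define U where "U = {v\<in>V. c v \<in> T}"
  have "\<forall>u\<in>U. \<forall>w\<in>V. E u w \<longrightarrow> w \<in> U"
  proof (intro ballI impI)
    fix u w assume "u \<in> U" "w \<in> V" "E u w"
    then have "card {w'\<in>V. E u w' \<and> c w' = c w} \<noteq> 0"
      using \<open>finite V\<close> by (auto simp: card_eq_0_iff)
    then have "A (c u) (c w) \<noteq> 0"
      using perfect_colouring_neighbours perfect_colouring_colour_less \<open>u \<in> U\<close> \<open>w \<in> V\<close>
      by (simp add: U_def)
    moreover have "c u \<in> T" "c w < m"
      using \<open>u \<in> U\<close> perfect_colouring_colour_less[OF \<open>w \<in> V\<close>] by (simp_all add: U_def)
    ultimately have "c w \<in> T"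
      using no_exit by blast
    then show "w \<in> U"
      using \<open>w \<in> V\<close> by (simp add: U_def)
  qed
  moreover have "U \<noteq> {}"
    using T perfect_colouring_colour_exists by (fastforce simp: U_def)
  ultimately have "U = V"
    using connected by (simp add: U_def)
  obtain b where "b < m" "b \<notin> T" using T by blast
  then obtain v where "v \<in> V" "c v = b"
    using perfect_colouring_colour_exists by blast
  then show False
    using \<open>U = V\<close> \<open>b \<notin> T\<close> by (auto simp: U_def)
qed

end

lemma perfect_colouring_permute:
  assumes perfect: "perfect_colouring V E m c M" and \<sigma>: "\<sigma> permutes {..<m}"
    and relabel: "\<forall>i<m. \<forall>j<m. A (\<sigma> i) (\<sigma> j) = M i j"
  shows "perfect_colouring V E m (\<sigma> \<circ> c) A"
  unfolding perfect_colouring_def is_colouring_def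
proof (intro conjI allI impI ballI)
  show "(\<sigma> \<circ> c) ` V = {..<m}"
    using perfect_colouring_image[OF perfect] permutes_image[OF \<sigma>]
    by (metis image_comp)
next
  fix i j v assume "i < m" "j < m" "v \<in> V" "(\<sigma> \<circ> c) v = i"
  define j' where "j' = inv \<sigma> j"
  have "j' < m" "\<sigma> j' = j"
    using \<open>j < m\<close> permutes_in_image[OF permutes_inv[OF \<sigma>]] permutes_inverses(1)[OF \<sigma>]
    by (simp_all add: j'_def)
  have "{w\<in>V. E v w \<and> (\<sigma> \<circ> c) w = j} = {w\<in>V. E v w \<and> c w = j'}"
    using \<open>\<sigma> j' = j\<close> permutes_inj[OF \<sigma>] by (auto simp: inj_eq)
  then have "card {w\<in>V. E v w \<and> (\<sigma> \<circ> c) w = j} = M (c v) j'"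
    using perfect_colouring_neighbours[OF perfect \<open>v \<in> V\<close> \<open>j' < m\<close>] by simp
  also have "\<dots> = A i j"
    using relabel perfect_colouring_colour_less[OF perfect \<open>v \<in> V\<close>] \<open>j' < m\<close>
      \<open>\<sigma> j' = j\<close> \<open>(\<sigma> \<circ> c) v = i\<close> by auto
  finally show "card {w\<in>V. E v w \<and> (\<sigma> \<circ> c) w = j} = A i j" .
qed

section \<open>The hypercube Q4\<close>

definition Q4_vertices :: "bool list list" where
  "Q4_vertices = List.n_lists 4 [False, True]"

lemma Q4_V_eq: "Q4_V = set Q4_vertices"
  by (auto simp: Q4_V_def Q4_vertices_def set_n_lists)

lemma distinct_Q4_vertices: "distinct Q4_vertices"
  by (simp add: Q4_vertices_def distinct_n_lists)

lemma finite_Q4_V: "finite Q4_V"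
  by (simp add: Q4_V_eq)

lemma card_Q4_V_filter: "card {v\<in>Q4_V. P v} = length (filter P Q4_vertices)"
  by (metis Q4_V_eq distinct_Q4_vertices distinct_card distinct_filter set_filter)

lemma card_Q4_V: "card Q4_V = 16"
  by (simp add: Q4_V_eq distinct_card[OF distinct_Q4_vertices] Q4_vertices_def numeral_eq_Suc)

lemma Q4_adj_code [code]: "Q4_adj u v \<longleftrightarrow> length (filter (\<lambda>i. u ! i \<noteq> v ! i) [0..<4]) = 1"
proof -
  have "length (filter (\<lambda>i. u ! i \<noteq> v ! i) [0..<4]) = card {i. i < 4 \<and> u ! i \<noteq> v ! i}"
    unfolding length_filter_conv_card by (auto intro: arg_cong[where f = card])
  then show ?thesis
    by (simp add: Q4_adj_def)
qed

lemma Q4_adj_sym: "Q4_adj u v \<longleftrightarrow> Q4_adj v u"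
proof -
  have "{i. i < 4 \<and> u ! i \<noteq> v ! i} = {i. i < 4 \<and> v ! i \<noteq> u ! i}" by auto
  then show ?thesis by (simp add: Q4_adj_def)
qed

lemma Q4_degree: "v \<in> Q4_V \<Longrightarrow> card {w\<in>Q4_V. Q4_adj v w} = 4"
proof -
  have "\<forall>v\<in>set Q4_vertices. length (filter (Q4_adj v) Q4_vertices) = 4"
    by code_simp
  then show "v \<in> Q4_V \<Longrightarrow> ?thesis"
    unfolding card_Q4_V_filter by (simp add: Q4_V_eq)
qed

lemma Q4_common_neighbours_even:
  "v \<in> Q4_V \<Longrightarrow> u \<in> Q4_V \<Longrightarrow> even (card {w\<in>Q4_V. Q4_adj v w \<and> Q4_adj w u})"
proof -
  have "\<forall>v\<in>set Q4_vertices. \<forall>u\<in>set Q4_vertices.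
      even (length (filter (\<lambda>w. Q4_adj v w \<and> Q4_adj w u) Q4_vertices))"
    by code_simp
  then show "v \<in> Q4_V \<Longrightarrow> u \<in> Q4_V \<Longrightarrow> ?thesis"
    unfolding card_Q4_V_filter by (simp add: Q4_V_eq)
qed

lemma Q4_adj_flip: "u \<in> Q4_V \<Longrightarrow> k < 4 \<Longrightarrow> Q4_adj u (u[k := \<not> u ! k])"
proof -
  assume "u \<in> Q4_V" "k < 4"
  then have "{i. i < 4 \<and> u ! i \<noteq> u[k := \<not> u ! k] ! i} = {k}"
    by (auto simp: Q4_V_def nth_list_update)
  then show ?thesis
    by (simp add: Q4_adj_def)
qed

lemma Q4_closed_update:
  assumes closed: "\<forall>u\<in>U. \<forall>w\<in>Q4_V. Q4_adj u w \<longrightarrow> w \<in> U" and "U \<subseteq> Q4_V"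
    and "u \<in> U" "k < 4"
  shows "u[k := b] \<in> U"
proof (cases "b = u ! k")
  case True
  then show ?thesis using \<open>u \<in> U\<close> by simp
next
  case False
  have "u \<in> Q4_V" using \<open>u \<in> U\<close> \<open>U \<subseteq> Q4_V\<close> by blast
  then have "u[k := \<not> u ! k] \<in> Q4_V" by (simp add: Q4_V_def)
  then show ?thesis
    using False closed Q4_adj_flip[OF \<open>u \<in> Q4_V\<close> \<open>k < 4\<close>] \<open>u \<in> U\<close> by auto
qed

lemma Q4_connected:
  assumes "U \<subseteq> Q4_V" "U \<noteq> {}" and closed: "\<forall>u\<in>U. \<forall>w\<in>Q4_V. Q4_adj u w \<longrightarrow> w \<in> U"
  shows "U = Q4_V"
proof
  obtain x where "x \<in> U" using \<open>U \<noteq> {}\<close> by blast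
  show "Q4_V \<subseteq> U"
  proof
    fix y assume "y \<in> Q4_V"
    have "x[0 := y ! 0, 1 := y ! 1, 2 := y ! 2, 3 := y ! 3] \<in> U"
      by (intro Q4_closed_update[OF closed \<open>U \<subseteq> Q4_V\<close>]) (simp_all add: \<open>x \<in> U\<close>)
    moreover have "x[0 := y ! 0, 1 := y ! 1, 2 := y ! 2, 3 := y ! 3] = y"
      using \<open>x \<in> U\<close> \<open>U \<subseteq> Q4_V\<close> \<open>y \<in> Q4_V\<close>
      by (auto simp: Q4_V_def numeral_eq_Suc length_Suc_conv)
    ultimately show "y \<in> U" by simp
  qed
qed (rule \<open>U \<subseteq> Q4_V\<close>)

section \<open>Necessary conditions and exhaustive search\<close>

fun compositions :: "nat \<Rightarrow> nat \<Rightarrow> nat list list" where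
  "compositions 0 s = (if s = 0 then [[]] else [])"
| "compositions (Suc k) s = concat (map (\<lambda>a. map ((#) a) (compositions k (s - a))) [1..<Suc s])"

lemma set_compositions:
  "set (compositions k s) = {ns. length ns = k \<and> (\<forall>x\<in>set ns. 0 < x) \<and> sum_list ns = s}"
proof (induction k arbitrary: s)
  case 0
  show ?case by auto
next
  case (Suc k)
  show ?case
  proof (intro set_eqI iffI)
    fix ns assume "ns \<in> set (compositions (Suc k) s)"
    then show "ns \<in> {ns. length ns = Suc k \<and> (\<forall>x\<in>set ns. 0 < x) \<and> sum_list ns = s}"
      using Suc.IH by auto
  next
    fix ns assume "ns \<in> {ns. length ns = Suc k \<and> (\<forall>x\<in>set ns. 0 < x) \<and> sum_list ns = s}"
    then obtain a ms where "ns = a # ms" "0 < a" "a \<le> s" "ms \<in> set (compositions k (s - a))"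
      using Suc.IH by (cases ns) auto
    then show "ns \<in> set (compositions (Suc k) s)"
      by (auto simp del: upt_Suc intro!: bexI[of _ a])
  qed
qed

definition matrix_rows :: "nat \<Rightarrow> (nat \<Rightarrow> nat \<Rightarrow> nat) \<Rightarrow> nat list list" where
  "matrix_rows m A = map (\<lambda>i. map (A i) [0..<m]) [0..<m]"

lemma matrix_rows_nth [simp]: "i < m \<Longrightarrow> j < m \<Longrightarrow> matrix_rows m A ! i ! j = A i j"
  by (simp add: matrix_rows_def)

text \<open>The third condition follows from the fourth; it is tested separately because it is much
  cheaper and prunes most candidates.\<close>

definition Q4_admissible :: "nat \<Rightarrow> nat list list \<Rightarrow> bool" where
  "Q4_admissible m R \<longleftrightarrow>
     (\<forall>i\<in>set [0..<m]. \<forall>j\<in>set [0..<m]. even (\<Sum>k\<leftarrow>[0..<m]. R ! i ! k * R ! k ! j)) \<and>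
     (\<forall>T\<in>set (subseqs [0..<m]). T \<noteq> [] \<and> length T < m \<longrightarrow>
        (\<exists>a\<in>set T. \<exists>b\<in>set [0..<m]. b \<notin> set T \<and> R ! a ! b \<noteq> 0)) \<and>
     (\<forall>i\<in>set [0..<m]. \<forall>j\<in>set [0..<m]. R ! i ! j = 0 \<longleftrightarrow> R ! j ! i = 0) \<and>
     (\<exists>n\<in>set (compositions m 16).
        \<forall>i\<in>set [0..<m]. \<forall>j\<in>set [0..<m]. n ! i * R ! i ! j = n ! j * R ! j ! i)"

lemma perfect_colouring_Q4_class_sizes:
  assumes perfect: "perfect_colouring Q4_V Q4_adj m c A"
  shows "map (\<lambda>i. card {v\<in>Q4_V. c v = i}) [0..<m] \<in> set (compositions m 16)"
proof -
  have "0 < card {v\<in>Q4_V. c v = i}" if "i < m" for i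
    using perfect_colouring_colour_exists[OF perfect that] finite_Q4_V by (auto simp: card_gt_0_iff)
  moreover have "(\<Sum>i<m. card {v\<in>Q4_V. c v = i}) = card Q4_V"
    using perfect_colouring_sum_classes[OF perfect finite_Q4_V subset_refl, of "\<lambda>_. 1"] by simp
  ultimately show ?thesis
    by (simp add: set_compositions card_Q4_V sum_list_sum_nth atLeast0LessThan)
qed

lemma perfect_colouring_Q4_exit:
  assumes perfect: "perfect_colouring Q4_V Q4_adj m c A"
    and T: "T \<in> set (subseqs [0..<m])" "T \<noteq> []" "length T < m"
  shows "\<exists>a\<in>set T. \<exists>b\<in>set [0..<m]. b \<notin> set T \<and> matrix_rows m A ! a ! b \<noteq> 0"
proof -
  have "set T \<in> Pow (set [0..<m])"
    using T(1) by (metis image_eqI subseqs_powset)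
  then have "set T \<subseteq> {..<m}"
    by auto
  moreover have "set T \<noteq> {..<m}"
  proof
    assume "set T = {..<m}"
    then have "card (set T) = m" by simp
    then show False using T(3) card_length[of T] by linarith
  qed
  moreover have "set T \<noteq> {}"
    using T(2) by simp
  ultimately obtain a b where "a \<in> set T" "b < m" "b \<notin> set T" "A a b \<noteq> 0"
    using perfect_colouring_irreducible[OF perfect finite_Q4_V Q4_connected] by blast
  moreover have "a < m"
    using \<open>set T \<subseteq> {..<m}\<close> \<open>a \<in> set T\<close> by blast
  ultimately show ?thesis
    by (intro bexI[of _ a] bexI[of _ b]) auto
qed

lemma perfect_colouring_Q4_admissible:
  assumes perfect: "perfect_colouring Q4_V Q4_adj m c A"
  shows "Q4_admissible m (matrix_rows m A)"
  unfolding Q4_admissible_def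
proof (intro conjI ballI impI)
  define n where "n = map (\<lambda>i. card {v\<in>Q4_V. c v = i}) [0..<m]"
  have sizes: "n \<in> set (compositions m 16)"
    using perfect_colouring_Q4_class_sizes[OF perfect] by (simp add: n_def)
  have balance: "n ! i * A i j = n ! j * A j i" if "i < m" "j < m" for i j
    using perfect_colouring_class_balance[OF perfect finite_Q4_V _ that] Q4_adj_sym that
    by (simp add: n_def)
  show "\<exists>n\<in>set (compositions m 16). \<forall>i\<in>set [0..<m]. \<forall>j\<in>set [0..<m].
      n ! i * matrix_rows m A ! i ! j = n ! j * matrix_rows m A ! j ! i"
    using sizes balance by (intro bexI[of _ n]) auto
  fix i j assume "i \<in> set [0..<m]" "j \<in> set [0..<m]"
  moreover have "0 < n ! i" "0 < n ! j"
    using sizes calculation by (auto simp: set_compositions n_def)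
  ultimately show "matrix_rows m A ! i ! j = 0 \<longleftrightarrow> matrix_rows m A ! j ! i = 0"
    using balance[of i j] by auto
next
  fix i j assume "i \<in> set [0..<m]" "j \<in> set [0..<m]"
  then show "even (\<Sum>k\<leftarrow>[0..<m]. matrix_rows m A ! i ! k * matrix_rows m A ! k ! j)"
    using perfect_colouring_square_even[OF perfect finite_Q4_V _, of i j] Q4_common_neighbours_even
    by (simp add: interv_sum_list_conv_sum_set_nat atLeast0LessThan)
next
  fix T assume "T \<in> set (subseqs [0..<m])" "T \<noteq> [] \<and> length T < m"
  then show "\<exists>a\<in>set T. \<exists>b\<in>set [0..<m]. b \<notin> set T \<and> matrix_rows m A ! a ! b \<noteq> 0"
    using perfect_colouring_Q4_exit[OF perfect] by blast
qed

definition row_candidates :: "nat \<Rightarrow> nat list list" where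
  "row_candidates m = [r\<leftarrow>List.n_lists m [0..<5]. sum_list r = 4]"

definition index_permutations :: "nat \<Rightarrow> nat list list" where
  "index_permutations m = [p\<leftarrow>List.n_lists m [0..<m]. distinct p]"

definition relabel :: "nat list \<Rightarrow> nat list list \<Rightarrow> nat list list" where
  "relabel p R = map (\<lambda>i. map (\<lambda>j. R ! i ! j) p) p"

lemma matrix_rows_in_candidates:
  assumes "\<forall>i<m. (\<Sum>j<m. A i j) = 4"
  shows "matrix_rows m A \<in> set (List.n_lists m (row_candidates m))"
proof -
  have "map (A i) [0..<m] \<in> set (row_candidates m)" if "i < m" for i
  proof -
    have "A i j < 5" if "j < m" for j
      using member_le_sum[of j "{..<m}" "A i"] assms \<open>i < m\<close> \<open>j < m\<close> by simp
    then show ?thesis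
      using assms \<open>i < m\<close> by (auto simp: row_candidates_def set_n_lists interv_sum_list_conv_sum_set_nat atLeast0LessThan)
  qed
  then show ?thesis
    by (auto simp: matrix_rows_def set_n_lists)
qed

lemma index_permutation_permutes:
  assumes "p \<in> set (index_permutations m)"
  shows "(\<lambda>i. if i < m then p ! i else i) permutes {..<m}"
proof (rule bij_imp_permutes)
  have p: "distinct p" "length p = m" "set p \<subseteq> {..<m}"
    using assms by (auto simp: index_permutations_def set_n_lists)
  then have "set p = {..<m}"
    by (metis card_lessThan card_subset_eq distinct_card finite_lessThan)
  then have "(\<lambda>i. if i < m then p ! i else i) ` {..<m} = {..<m}"
    using p by (auto simp: set_conv_nth image_iff)
  moreover have "inj_on (\<lambda>i. if i < m then p ! i else i) {..<m}"
    using p by (auto simp: inj_on_def nth_eq_iff_index_eq)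
  ultimately show "bij_betw (\<lambda>i. if i < m then p ! i else i) {..<m} {..<m}"
    by (simp add: bij_betw_def)
qed simp

lemma equiv_up_to_perm_relabel:
  assumes "p \<in> set (index_permutations m)"
  shows "equiv_up_to_perm m A (mat_of (relabel p (matrix_rows m A)))"
proof -
  have "length p = m" "set p \<subseteq> {..<m}"
    using assms by (auto simp: index_permutations_def set_n_lists)
  have "mat_of (relabel p (matrix_rows m A)) i j = A (p ! i) (p ! j)" if "i < m" "j < m" for i j
  proof -
    have "p ! i < m" "p ! j < m"
      using that \<open>length p = m\<close> \<open>set p \<subseteq> {..<m}\<close> nth_mem by blast+
    then show ?thesis
      using that \<open>length p = m\<close> by (simp add: mat_of_def relabel_def)
  qed
  then show ?thesis
    unfolding equiv_up_to_perm_def using index_permutation_permutes[OF assms] by auto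
qed

lemma list_all_n_lists_Suc:
  "list_all P (List.n_lists (Suc n) xs) = list_all (\<lambda>ys. list_all (\<lambda>y. P (y # ys)) xs) (List.n_lists n xs)"
  by (auto simp: list_all_iff)

text \<open>A disjunction rather than an implication: \<open>code_simp\<close> evaluates a disjunction from the
  left and stops as soon as it holds, but it evaluates both sides of an implication.\<close>

definition Q4_search_covers :: "nat \<Rightarrow> nat list list list \<Rightarrow> bool" where
  "Q4_search_covers m Ms \<longleftrightarrow>
     list_all (\<lambda>R. \<not> Q4_admissible m R \<or> (\<exists>p\<in>set (index_permutations m). relabel p R \<in> set Ms))
       (List.n_lists m (row_candidates m))"

lemma perfect_colouring_Q4_covered:
  assumes "Q4_search_covers m Ms" and perfect: "perfect_colouring Q4_V Q4_adj m c A"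
  shows "\<exists>M\<in>set Ms. equiv_up_to_perm m A (mat_of M)"
proof -
  have "\<forall>i<m. (\<Sum>j<m. A i j) = 4"
    using perfect_colouring_row_sum[OF perfect finite_Q4_V] Q4_degree by blast
  then have "matrix_rows m A \<in> set (List.n_lists m (row_candidates m))"
    by (rule matrix_rows_in_candidates)
  then obtain p where "p \<in> set (index_permutations m)" "relabel p (matrix_rows m A) \<in> set Ms"
    using assms(1) perfect_colouring_Q4_admissible[OF perfect]
    by (auto simp: Q4_search_covers_def list_all_iff)
  then show ?thesis
    using equiv_up_to_perm_relabel by blast
qed

section \<open>Realisations\<close>

text \<open>Entry \<open>k\<close> of a table is the colour of the \<open>k\<close>-th element of \<^const>\<open>Q4_vertices\<close>,
  the vertex whose bits, least significant first, spell \<open>k\<close> in binary.\<close>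

definition colouring_of_table :: "nat list \<Rightarrow> bool list \<Rightarrow> nat" where
  "colouring_of_table t v = t ! horner_sum of_bool 2 v"

definition Q4_table_realises :: "nat \<Rightarrow> nat list \<Rightarrow> nat list list \<Rightarrow> bool" where
  "Q4_table_realises m t M \<longleftrightarrow>
     set (map (colouring_of_table t) Q4_vertices) = {..<m} \<and>
     (\<forall>v\<in>set Q4_vertices. \<forall>j\<in>{..<m}.
        length (filter (\<lambda>w. Q4_adj v w \<and> colouring_of_table t w = j) Q4_vertices) =
        M ! colouring_of_table t v ! j)"

lemma perfect_colouring_of_table:
  "Q4_table_realises m t M \<Longrightarrow> perfect_colouring Q4_V Q4_adj m (colouring_of_table t) (mat_of M)"
  unfolding perfect_colouring_def is_colouring_def Q4_table_realises_def card_Q4_V_filter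
  by (auto simp: Q4_V_eq mat_of_def)

definition Q4_2_colourings :: "(nat list list \<times> nat list) list" where
  "Q4_2_colourings =
    [([[0,4],[4,0]], [0,1,1,0,1,0,0,1,1,0,0,1,0,1,1,0]),
     ([[1,3],[1,3]], [0,0,1,1,1,1,1,1,1,1,1,1,1,1,0,0]),
     ([[1,3],[3,1]], [0,0,1,1,1,1,0,0,1,1,0,0,0,0,1,1]),
     ([[2,2],[2,2]], [0,0,0,0,1,1,1,1,1,1,1,1,0,0,0,0]),
     ([[3,1],[1,3]], [0,0,0,0,0,0,0,0,1,1,1,1,1,1,1,1])]"

definition Q4_3_colourings :: "(nat list list \<times> nat list) list" where
  "Q4_3_colourings =
    [([[0,0,4],[0,0,4],[1,3,0]], [0,2,2,1,2,1,1,2,2,1,1,2,1,2,2,0]),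
     ([[0,0,4],[0,0,4],[2,2,0]], [0,2,2,0,2,1,1,2,2,1,1,2,0,2,2,0]),
     ([[0,2,2],[2,0,2],[1,1,2]], [0,1,1,0,2,2,2,2,2,2,2,2,1,0,0,1]),
     ([[1,1,2],[1,1,2],[1,1,2]], [0,0,1,1,2,2,2,2,2,2,2,2,1,1,0,0]),
     ([[2,0,2],[0,2,2],[1,1,2]], [0,0,0,0,2,2,2,2,2,2,2,2,1,1,1,1])]"

lemma Q4_2_colourings_realise: "\<forall>(M, t)\<in>set Q4_2_colourings. Q4_table_realises 2 t M"
  by code_simp

lemma Q4_3_colourings_realise: "\<forall>(M, t)\<in>set Q4_3_colourings. Q4_table_realises 3 t M"
  by code_simp

lemma Q4_perfect_colourings_iff:
  assumes "Q4_search_covers m (map fst Cs)" and realised: "\<forall>(M, t)\<in>set Cs. Q4_table_realises m t M"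
  shows "(\<exists>c. perfect_colouring Q4_V Q4_adj m c A) \<longleftrightarrow>
    (\<exists>M\<in>mat_of ` set (map fst Cs). equiv_up_to_perm m A M)"
proof
  assume "\<exists>c. perfect_colouring Q4_V Q4_adj m c A"
  then obtain M where "M \<in> set (map fst Cs)" "equiv_up_to_perm m A (mat_of M)"
    using perfect_colouring_Q4_covered[OF assms(1)] by blast
  then show "\<exists>M\<in>mat_of ` set (map fst Cs). equiv_up_to_perm m A M"
    by blast
next
  assume "\<exists>M\<in>mat_of ` set (map fst Cs). equiv_up_to_perm m A M"
  then obtain M t \<sigma> where "(M, t) \<in> set Cs" "\<sigma> permutes {..<m}"
    "\<forall>i<m. \<forall>j<m. A (\<sigma> i) (\<sigma> j) = mat_of M i j"
    unfolding equiv_up_to_perm_def by auto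
  then show "\<exists>c. perfect_colouring Q4_V Q4_adj m c A"
    using perfect_colouring_permute[OF perfect_colouring_of_table] realised by blast
qed

text \<open>Unrolled into nested loops over the rows, the admissibility test is partially evaluated
  before the inner rows are instantiated, which makes the search several times faster.\<close>

lemma Q4_2_search_covers: "Q4_search_covers 2 (map fst Q4_2_colourings)"
  unfolding Q4_search_covers_def numeral_2_eq_2 list_all_n_lists_Suc by code_simp

lemma Q4_3_search_covers: "Q4_search_covers 3 (map fst Q4_3_colourings)"
  unfolding Q4_search_covers_def numeral_3_eq_3 list_all_n_lists_Suc by code_simp

theorem theorem5p1:
  shows "(\<forall>A. (\<exists>c. perfect_colouring Q4_V Q4_adj 2 c A) \<longleftrightarrow>
            (\<exists>M \<in> mat_of ` {[[0,4],[4,0]], [[1,3],[1,3]], [[1,3],[3,1]], [[2,2],[2,2]], [[3,1],[1,3]]}.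
               equiv_up_to_perm 2 A M)) \<and>
         (\<forall>A. (\<exists>c. perfect_colouring Q4_V Q4_adj 3 c A) \<longleftrightarrow>
            (\<exists>M \<in> mat_of ` {[[0,0,4],[0,0,4],[1,3,0]], [[0,0,4],[0,0,4],[2,2,0]],
                              [[0,2,2],[2,0,2],[1,1,2]], [[1,1,2],[1,1,2],[1,1,2]],
                              [[2,0,2],[0,2,2],[1,1,2]]}.
               equiv_up_to_perm 3 A M))"
  using Q4_perfect_colourings_iff[OF Q4_2_search_covers Q4_2_colourings_realise]
    Q4_perfect_colourings_iff[OF Q4_3_search_covers Q4_3_colourings_realise]
  by (simp add: Q4_2_colourings_def Q4_3_colourings_def)

end
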